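(* Let $\Gamma$ be a subset of $M^{\mathbb{R}}_{n\times n}(\mathbb{C})$ such that for any $A,B\in\Gamma$ there exists a function $p:[0,1]\rightarrow M^{\mathbb{R}}_{n\times n}(\mathbb{C})$ whose entries are analytic functions on $[0,1]$ with $p(0)=A$, $p(1)=B$ and $p([0,1])\subset\Gamma$. Let $\Gamma_d$ be the set of matrices in $\Gamma$ whose eigenvalues are distinct. If $\Gamma$ contains at least one matrix with distinct eigenvalues, then $\Gamma_d$ is dense in $\Gamma$.
   Context: $M^{\mathbb{R}}_{n\times n}(\mathbb{C})$ denotes the set of $n\times n$ complex matrices all of whose eigenvalues are real, with the topology induced by the Frobenius norm. A complex-valued function is analytic on $[0,1]$ if it is the restriction of a function defined on an open interval containing $[0,1]$ which around each point is given by a convergent power series. Distinct eigenvalues means $n$ pairwise different eigenvalues. *)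

theory Defs
  imports "HOL-Analysis.Analysis"
begin

definition is_eigenvalue :: "complex^'n^'n \<Rightarrow> complex \<Rightarrow> bool" where
  "is_eigenvalue A \<mu> \<longleftrightarrow> det (A - mat \<mu>) = 0"

definition eigenvalues :: "complex^'n^'n \<Rightarrow> complex set" where
  "eigenvalues A = {\<mu>. is_eigenvalue A \<mu>}"

definition real_spectrum_matrices :: "(complex^'n^'n) set" where
  "real_spectrum_matrices = {A. \<forall>\<mu>\<in>eigenvalues A. Im \<mu> = 0}"

definition distinct_eigenvalues :: "complex^'n^'n \<Rightarrow> bool" where
  "distinct_eigenvalues A \<longleftrightarrow> card (eigenvalues A) = CARD('n)"

definition real_analytic_on :: "(real \<Rightarrow> complex) \<Rightarrow> real set \<Rightarrow> bool" where
  "real_analytic_on g U \<longleftrightarrow>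
     (\<forall>x0\<in>U. \<exists>r>0. \<exists>c::nat \<Rightarrow> complex.
        \<forall>x. \<bar>x - x0\<bar> < r \<longrightarrow> (\<lambda>k. c k * of_real ((x - x0) ^ k)) sums g x)"

definition analytic_on_01 :: "(real \<Rightarrow> complex) \<Rightarrow> bool" where
  "analytic_on_01 f \<longleftrightarrow>
     (\<exists>a b g. a < 0 \<and> 1 < b \<and> real_analytic_on g {a<..<b} \<and> (\<forall>t\<in>{0..1}. f t = g t))"

end

theory Submission
  imports Defs
    "HOL-Complex_Analysis.Conformal_Mappings"
    "HOL-Computational_Algebra.Field_as_Ring"
    "HOL-Computational_Algebra.Fundamental_Theorem_Algebra"
    "Subresultants.Subresultant_Gcd"
begin

(* Join B to a matrix A of \<Gamma> with distinct eigenvalues by an analytic path p. The resultant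
   of the characteristic polynomial of p t and its derivative (up to a constant, its discriminant)
   is a polynomial in the entries of p t, hence real-analytic in t, and it is nonzero at t = 1.
   By the identity theorem it does not vanish identically on any interval (0, \<delta>), so p t has
   distinct eigenvalues for t arbitrarily close to 0, and p t tends to p 0 = B.
   Real analyticity is handled through local holomorphic extensions, so that closure under ring
   operations and the identity theorem come from complex analysis. *)

no_notation Matrix.vec_index (infixl "$" 100)

definition charpoly_matrix :: "'a::comm_ring_1^'n^'n \<Rightarrow> 'a poly^'n^'n" where
  "charpoly_matrix M = (\<chi> i j. [:M $ i $ j:] - (if i = j then [:0, 1:] else 0))"

definition charpoly :: "'a::comm_ring_1^'n^'n \<Rightarrow> 'a poly" where
  "charpoly M = Determinants.det (charpoly_matrix M)"

lemma poly_det: "poly (Determinants.det N) x = Determinants.det (\<chi> i j. poly (N $ i $ j) x)"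
  unfolding Determinants.det_def by (simp add: poly_sum poly_prod)

lemma poly_charpoly: "poly (charpoly M) x = Determinants.det (M - Finite_Cartesian_Product.mat x)"
  unfolding charpoly_def poly_det
  by (rule arg_cong[where f = Determinants.det])
     (simp add: charpoly_matrix_def Finite_Cartesian_Product.vec_eq_iff
        Finite_Cartesian_Product.mat_def)

lemma eigenvalues_eq_roots_charpoly: "eigenvalues M = {\<mu>. poly (charpoly M) \<mu> = 0}"
  by (simp add: eigenvalues_def is_eigenvalue_def poly_charpoly)

lemma degree_prod_charpoly_matrix_less:
  fixes M :: "'a::idom^'n^'n"
  assumes "p \<noteq> id"
  shows "degree (\<Prod>i\<in>UNIV. charpoly_matrix M $ i $ p i) < CARD('n)"
proof -
  obtain k where k: "p k \<noteq> k"
    using assms by (auto simp: fun_eq_iff)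
  have "degree (\<Prod>i\<in>UNIV. charpoly_matrix M $ i $ p i)
      \<le> (\<Sum>i\<in>UNIV. degree (charpoly_matrix M $ i $ p i))"
    using degree_prod_sum_le[of UNIV "\<lambda>i. charpoly_matrix M $ i $ p i"] by (simp add: o_def)
  also have "\<dots> \<le> (\<Sum>i\<in>UNIV. if i = k then 0 else 1)"
    using k by (intro sum_mono) (auto simp: charpoly_matrix_def)
  also have "\<dots> < CARD('n)"
    by (simp add: sum.If_cases Compl_eq_Diff_UNIV card_Diff_singleton_if)
  finally show ?thesis .
qed

lemma degree_charpoly: "degree (charpoly (M::'a::idom^'n^'n)) = CARD('n)"
  and lead_coeff_charpoly: "lead_coeff (charpoly (M::'a::idom^'n^'n)) = (-1) ^ CARD('n)"
proof -
  let ?t = "\<lambda>p. of_int (sign p) * (\<Prod>i\<in>UNIV. charpoly_matrix M $ i $ p i)"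
  have diagonal: "?t id = (\<Prod>i\<in>UNIV. [:M $ i $ i:] - [:0, 1:])"
    by (simp add: charpoly_matrix_def)
  have degree_diagonal: "degree (?t id) = CARD('n)"
    unfolding diagonal by (subst degree_prod_eq_sum_degree) auto
  have "coeff (?t id) CARD('n) = lead_coeff (\<Prod>i\<in>UNIV. [:M $ i $ i:] - [:0, 1:])"
    using degree_diagonal unfolding diagonal by (simp only:)
  also have "\<dots> = (\<Prod>i\<in>(UNIV::'n set). -1)"
    unfolding lead_coeff_prod by (simp add: lead_coeff_pCons)
  finally have coeff_diagonal: "coeff (?t id) CARD('n) = (-1) ^ CARD('n)"
    by simp
  have degree_off_diagonal: "degree (?t p) < CARD('n)"
    if "p \<in> {p. p permutes (UNIV::'n set)} - {id}" for p
    using degree_mult_le[of "of_int (sign p)" "\<Prod>i\<in>UNIV. charpoly_matrix M $ i $ p i"]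
      degree_prod_charpoly_matrix_less[of p M] that
    by simp
  have "finite {p. p permutes (UNIV::'n set)}" "id \<in> {p. p permutes (UNIV::'n set)}"
    by (simp_all add: finite_permutations permutes_id)
  from degree_lcoeff_sum[where f = ?t, OF degree_diagonal this degree_off_diagonal coeff_diagonal]
  have "degree (charpoly M) = CARD('n) \<and> coeff (charpoly M) CARD('n) = (-1) ^ CARD('n)"
    unfolding charpoly_def Determinants.det_def .
  then show "degree (charpoly M) = CARD('n)" "lead_coeff (charpoly M) = (-1) ^ CARD('n)"
    by simp_all
qed

lemma card_roots_eq_degree_iff_rsquarefree:
  fixes p :: "complex poly"
  assumes "p \<noteq> 0"
  shows "card {x. poly p x = 0} = degree p \<longleftrightarrow> rsquarefree p"
proof -
  let ?R = "{x. poly p x = 0}"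
  have order_pos: "\<forall>x\<in>?R. order x p \<ge> 1"
    using assms by (simp add: order_root Suc_le_eq)
  have "degree p = (\<Sum>x\<in>?R. order x p)"
    using assms size_proots_complex[of p]
    by (simp add: size_multiset_overloaded_eq set_count_proots)
  also have "\<dots> = (\<Sum>x\<in>?R. 1 + (order x p - 1))"
    using order_pos by (intro sum.cong) auto
  also have "\<dots> = card ?R + (\<Sum>x\<in>?R. order x p - 1)"
    by (simp only: sum.distrib) simp
  finally have "card ?R = degree p \<longleftrightarrow> (\<forall>x\<in>?R. order x p - 1 = 0)"
    using poly_roots_finite[OF assms] by simp
  also have "\<dots> \<longleftrightarrow> (\<forall>x. order x p \<le> 1)"
    using assms by (auto simp: order_root) (metis le0 not_gr0)
  also have "\<dots> \<longleftrightarrow> rsquarefree p"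
    using assms by (auto simp: rsquarefree_def le_Suc_eq)
  finally show ?thesis .
qed

lemma common_root_iff_degree_gcd:
  fixes p q :: "complex poly"
  assumes "p \<noteq> 0"
  shows "(\<exists>a. poly p a = 0 \<and> poly q a = 0) \<longleftrightarrow> degree (gcd p q) \<noteq> 0"
proof
  assume "\<exists>a. poly p a = 0 \<and> poly q a = 0"
  then obtain a where "poly p a = 0" "poly q a = 0" by blast
  then have "[:-a, 1:] dvd gcd p q" by (simp add: poly_eq_0_iff_dvd)
  moreover have "gcd p q \<noteq> 0" using assms by simp
  ultimately have "degree [:-a, 1:] \<le> degree (gcd p q)" by (rule dvd_imp_degree_le)
  then show "degree (gcd p q) \<noteq> 0" by simp
next
  assume "degree (gcd p q) \<noteq> 0"
  then have "\<not> constant (poly (gcd p q))" by (simp add: constant_degree)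
  from fundamental_theorem_of_algebra[OF this] obtain a where "poly (gcd p q) a = 0" ..
  then have "poly p a = 0" "poly q a = 0"
    by (metis dvd_trans gcd_dvd1 gcd_dvd2 poly_eq_0_iff_dvd)+
  then show "\<exists>a. poly p a = 0 \<and> poly q a = 0" by blast
qed

lemma resultant_eq_0_iff_common_root:
  fixes p q :: "complex poly"
  assumes "p \<noteq> 0"
  shows "resultant p q = 0 \<longleftrightarrow> (\<exists>a. poly p a = 0 \<and> poly q a = 0)"
  using assms by (simp add: resultant_0_gcd common_root_iff_degree_gcd)

lemma rsquarefree_iff_resultant_pderiv:
  fixes p :: "complex poly"
  assumes "p \<noteq> 0"
  shows "rsquarefree p \<longleftrightarrow> resultant p (pderiv p) \<noteq> 0"
  using assms by (simp add: rsquarefree_roots resultant_eq_0_iff_common_root)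

text \<open>Up to a nonzero constant factor, the discriminant of the characteristic polynomial.\<close>
definition discr :: "complex^'n^'n \<Rightarrow> complex" where
  "discr M = resultant (charpoly M) (pderiv (charpoly M))"

lemma distinct_eigenvalues_iff_discr: "distinct_eigenvalues M \<longleftrightarrow> discr M \<noteq> 0"
proof -
  have nonzero: "charpoly M \<noteq> 0"
    using lead_coeff_charpoly[of M] by auto
  have "distinct_eigenvalues M \<longleftrightarrow> card {\<mu>. poly (charpoly M) \<mu> = 0} = degree (charpoly M)"
    by (simp add: distinct_eigenvalues_def eigenvalues_eq_roots_charpoly degree_charpoly)
  then show ?thesis
    using nonzero
    by (simp add: card_roots_eq_degree_iff_rsquarefree rsquarefree_iff_resultant_pderiv discr_def)
qed

definition holomorphic_coeffs_on :: "(complex \<Rightarrow> complex poly) \<Rightarrow> complex set \<Rightarrow> bool" where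
  "holomorphic_coeffs_on F S \<longleftrightarrow> (\<forall>k. (\<lambda>z. coeff (F z) k) holomorphic_on S)"

lemma holomorphic_coeffs_on_const [simp]: "holomorphic_coeffs_on (\<lambda>z. p) S"
  by (simp add: holomorphic_coeffs_on_def)

lemma holomorphic_coeffs_on_constant_poly:
  assumes "f holomorphic_on S"
  shows "holomorphic_coeffs_on (\<lambda>z. [:f z:]) S"
  unfolding holomorphic_coeffs_on_def
proof
  fix k
  show "(\<lambda>z. coeff [:f z:] k) holomorphic_on S"
    using assms by (cases k) simp_all
qed

lemma holomorphic_coeffs_on_diff:
  "holomorphic_coeffs_on F S \<Longrightarrow> holomorphic_coeffs_on G S \<Longrightarrow>
    holomorphic_coeffs_on (\<lambda>z. F z - G z) S"
  by (simp add: holomorphic_coeffs_on_def holomorphic_on_diff)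

lemma holomorphic_coeffs_on_mult:
  "holomorphic_coeffs_on F S \<Longrightarrow> holomorphic_coeffs_on G S \<Longrightarrow>
    holomorphic_coeffs_on (\<lambda>z. F z * G z) S"
  unfolding holomorphic_coeffs_on_def coeff_mult
  by (intro allI holomorphic_on_sum holomorphic_on_mult) auto

lemma holomorphic_coeffs_on_sum:
  "finite A \<Longrightarrow> (\<And>a. a \<in> A \<Longrightarrow> holomorphic_coeffs_on (F a) S) \<Longrightarrow>
    holomorphic_coeffs_on (\<lambda>z. \<Sum>a\<in>A. F a z) S"
  unfolding holomorphic_coeffs_on_def coeff_sum
  by (intro allI holomorphic_on_sum) auto

lemma holomorphic_coeffs_on_prod:
  "finite A \<Longrightarrow> (\<And>a. a \<in> A \<Longrightarrow> holomorphic_coeffs_on (F a) S) \<Longrightarrow>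
    holomorphic_coeffs_on (\<lambda>z. \<Prod>a\<in>A. F a z) S"
  by (induction A rule: finite_induct) (simp_all add: holomorphic_coeffs_on_mult)

lemma holomorphic_coeffs_on_pderiv:
  "holomorphic_coeffs_on F S \<Longrightarrow> holomorphic_coeffs_on (\<lambda>z. pderiv (F z)) S"
  unfolding holomorphic_coeffs_on_def coeff_pderiv
  by (auto intro: holomorphic_on_mult holomorphic_on_const)

lemma holomorphic_coeffs_on_det:
  assumes "\<And>i j. holomorphic_coeffs_on (\<lambda>z. N z $ i $ j) S"
  shows "holomorphic_coeffs_on (\<lambda>z. Determinants.det (N z :: complex poly^'n^'n)) S"
  unfolding Determinants.det_def
  by (intro holomorphic_coeffs_on_sum holomorphic_coeffs_on_mult holomorphic_coeffs_on_const
      holomorphic_coeffs_on_prod assms) (simp_all add: finite_permutations)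

lemma holomorphic_coeffs_on_charpoly:
  assumes "\<And>i j. (\<lambda>z. M z $ i $ j) holomorphic_on S"
  shows "holomorphic_coeffs_on (\<lambda>z. charpoly (M z :: complex^'n^'n)) S"
  unfolding charpoly_def
  by (intro holomorphic_coeffs_on_det)
     (simp add: charpoly_matrix_def holomorphic_coeffs_on_diff holomorphic_coeffs_on_constant_poly
        assms)

lemma holomorphic_on_det_mat:
  assumes "\<And>z. A z \<in> carrier_mat n n"
    and "\<And>i j. i < n \<Longrightarrow> j < n \<Longrightarrow> (\<lambda>z. A z $$ (i, j)) holomorphic_on S"
  shows "(\<lambda>z. Determinant.det (A z)) holomorphic_on S"
proof -
  have "(\<lambda>z. \<Sum>p\<in>{p. p permutes {0..<n}}. signof p * (\<Prod>i=0..<n. A z $$ (i, p i)))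
      holomorphic_on S"
    by (intro holomorphic_on_sum holomorphic_on_mult holomorphic_on_const holomorphic_on_prod
        assms(2)) (auto simp: permutes_in_image)
  then show ?thesis
    by (simp add: det_def'[OF assms(1)])
qed

lemma holomorphic_on_resultant:
  assumes F: "holomorphic_coeffs_on F S" and G: "holomorphic_coeffs_on G S"
    and degree_F: "\<And>z. degree (F z) = m" and degree_G: "\<And>z. degree (G z) = k"
  shows "(\<lambda>z. resultant (F z) (G z)) holomorphic_on S"
proof -
  have "(\<lambda>z. Determinant.det (sylvester_mat_sub m k (F z) (G z))) holomorphic_on S"
  proof (rule holomorphic_on_det_mat)
    show "sylvester_mat_sub m k (F z) (G z) \<in> carrier_mat (m + k) (m + k)" for z
      by (rule sylvester_mat_sub_carrier)
    show "(\<lambda>z. sylvester_mat_sub m k (F z) (G z) $$ (i, j)) holomorphic_on S"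
      if "i < m + k" "j < m + k" for i j
    proof -
      have if_holomorphic: "(\<lambda>z. if P then f z else g z) holomorphic_on S"
        if "f holomorphic_on S" "g holomorphic_on S" for P and f g :: "complex \<Rightarrow> complex"
        using that by (cases P) simp_all
      show ?thesis
        using F G unfolding sylvester_mat_sub_index[OF that] holomorphic_coeffs_on_def
        by (intro if_holomorphic) (simp_all add: holomorphic_on_const)
    qed
  qed
  then show ?thesis
    by (simp add: resultant_def sylvester_mat_def degree_F degree_G)
qed

lemma holomorphic_on_discr:
  assumes "\<And>i j. (\<lambda>z. M z $ i $ j) holomorphic_on S"
  shows "(\<lambda>z. discr (M z :: complex^'n^'n)) holomorphic_on S"
  unfolding discr_def
proof (rule holomorphic_on_resultant)
  show charpoly: "holomorphic_coeffs_on (\<lambda>z. charpoly (M z)) S"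
    by (rule holomorphic_coeffs_on_charpoly[OF assms])
  show "holomorphic_coeffs_on (\<lambda>z. pderiv (charpoly (M z))) S"
    by (rule holomorphic_coeffs_on_pderiv[OF charpoly])
  show "degree (charpoly (M z)) = CARD('n)" for z
    by (rule degree_charpoly)
  show "degree (pderiv (charpoly (M z))) = CARD('n) - 1" for z
    by (simp add: degree_pderiv degree_charpoly)
qed

definition holomorphic_extensible_on :: "(real \<Rightarrow> complex) \<Rightarrow> real set \<Rightarrow> bool" where
  "holomorphic_extensible_on h U \<longleftrightarrow>
     (\<forall>x0\<in>U. \<exists>r>0. \<exists>H. H holomorphic_on ball (complex_of_real x0) r \<and>
        (\<forall>x. \<bar>x - x0\<bar> < r \<longrightarrow> H (complex_of_real x) = h x))"

lemma holomorphic_extensible_on_subset: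
  "holomorphic_extensible_on h U \<Longrightarrow> V \<subseteq> U \<Longrightarrow> holomorphic_extensible_on h V"
  unfolding holomorphic_extensible_on_def by blast

lemma holomorphic_on_eval_fps_shifted:
  fixes f :: "complex fps"
  assumes "ereal r \<le> fps_conv_radius f"
  shows "(\<lambda>z. eval_fps f (z - w)) holomorphic_on ball w r"
proof -
  have "(\<lambda>z. z - w) ` ball w r \<subseteq> eball 0 (fps_conv_radius f)"
  proof
    fix v assume "v \<in> (\<lambda>z. z - w) ` ball w r"
    then have "ereal (norm v) < ereal r"
      by (auto simp: dist_norm norm_minus_commute)
    then have "ereal (norm v) < fps_conv_radius f"
      using assms by (rule less_le_trans)
    then show "v \<in> eball 0 (fps_conv_radius f)"
      by simp
  qed
  then have "(eval_fps f \<circ> (\<lambda>z. z - w)) holomorphic_on ball w r"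
    by (intro holomorphic_on_compose_gen[OF _ holomorphic_on_eval_fps[OF order.refl]])
       (auto intro: holomorphic_intros)
  then show ?thesis
    by (simp add: o_def)
qed

lemma real_analytic_on_imp_holomorphic_extensible_on:
  assumes "real_analytic_on g U"
  shows "holomorphic_extensible_on g U"
  unfolding holomorphic_extensible_on_def
proof
  fix x0 assume "x0 \<in> U"
  then obtain r c where "r > 0" and sums:
    "\<And>x. \<bar>x - x0\<bar> < r \<Longrightarrow> (\<lambda>k. c k * of_real ((x - x0) ^ k)) sums g x"
    using assms unfolding real_analytic_on_def by blast
  have "ereal r \<le> fps_conv_radius (Abs_fps c)"
    unfolding fps_conv_radius_def
  proof (simp, rule conv_radius_geI_ex')
    fix s :: real assume "0 < s" "ereal s < ereal r"
    then have "(\<lambda>k. c k * of_real ((x0 + s - x0) ^ k)) sums g (x0 + s)"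
      by (intro sums) auto
    then show "summable (\<lambda>n. c n * complex_of_real s ^ n)"
      by (simp add: sums_summable of_real_power)
  qed
  then have "(\<lambda>z. eval_fps (Abs_fps c) (z - complex_of_real x0))
      holomorphic_on ball (complex_of_real x0) r"
    by (rule holomorphic_on_eval_fps_shifted)
  moreover have "eval_fps (Abs_fps c) (complex_of_real x - complex_of_real x0) = g x"
    if "\<bar>x - x0\<bar> < r" for x
    using sums[OF that] by (simp add: eval_fps_def sums_iff of_real_power)
  ultimately show "\<exists>r>0. \<exists>H. H holomorphic_on ball (complex_of_real x0) r \<and>
      (\<forall>x. \<bar>x - x0\<bar> < r \<longrightarrow> H (complex_of_real x) = g x)"
    using \<open>r > 0\<close> by blast
qed

lemma holomorphic_extensible_on_imp_continuous_on:
  assumes "holomorphic_extensible_on h U"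
  shows "continuous_on U h"
proof (intro continuous_at_imp_continuous_on ballI)
  fix x0 assume "x0 \<in> U"
  then obtain r H where "r > 0" and H: "H holomorphic_on ball (complex_of_real x0) r"
    and extends: "\<forall>x. \<bar>x - x0\<bar> < r \<longrightarrow> H (complex_of_real x) = h x"
    using assms unfolding holomorphic_extensible_on_def by blast
  have "isCont H (complex_of_real x0)"
    using H \<open>r > 0\<close>
    by (meson centre_in_ball continuous_on_eq_continuous_at holomorphic_on_imp_continuous_on
        open_ball)
  moreover have "isCont complex_of_real x0"
    by (intro continuous_intros)
  ultimately have "isCont (\<lambda>x. H (complex_of_real x)) x0"
    by (simp add: isCont_o2)
  moreover have "eventually (\<lambda>x. H (complex_of_real x) = h x) (nhds x0)"
    unfolding eventually_nhds_metric dist_real_def using \<open>r > 0\<close> extends by blast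
  ultimately show "isCont h x0"
    by (simp add: isCont_cong)
qed

lemma holomorphic_extensible_on_common_radius:
  assumes "finite I" "\<And>i. i \<in> I \<Longrightarrow> holomorphic_extensible_on (h i) U" "x0 \<in> U"
  shows "\<exists>r>0. \<exists>H. \<forall>i\<in>I. H i holomorphic_on ball (complex_of_real x0) r \<and>
           (\<forall>x. \<bar>x - x0\<bar> < r \<longrightarrow> H i (complex_of_real x) = h i x)"
  using assms(1,2)
proof (induction I rule: finite_induct)
  case empty
  show ?case by (intro exI[of _ 1]) simp
next
  case (insert j I)
  then obtain r H where "r > 0" and H: "\<forall>i\<in>I. H i holomorphic_on ball (complex_of_real x0) r \<and>
      (\<forall>x. \<bar>x - x0\<bar> < r \<longrightarrow> H i (complex_of_real x) = h i x)"
    by blast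
  obtain s Hj where "s > 0" and Hj: "Hj holomorphic_on ball (complex_of_real x0) s"
    "\<forall>x. \<bar>x - x0\<bar> < s \<longrightarrow> Hj (complex_of_real x) = h j x"
    using insert.prems \<open>x0 \<in> U\<close> unfolding holomorphic_extensible_on_def by blast
  have "\<forall>i\<in>insert j I. (H(j := Hj)) i holomorphic_on ball (complex_of_real x0) (min r s) \<and>
      (\<forall>x. \<bar>x - x0\<bar> < min r s \<longrightarrow> (H(j := Hj)) i (complex_of_real x) = h i x)"
  proof
    fix i assume "i \<in> insert j I"
    moreover have "ball (complex_of_real x0) (min r s) \<subseteq> ball (complex_of_real x0) r"
      "ball (complex_of_real x0) (min r s) \<subseteq> ball (complex_of_real x0) s"
      by (simp_all add: subset_ball)
    ultimately show "(H(j := Hj)) i holomorphic_on ball (complex_of_real x0) (min r s) \<and>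
        (\<forall>x. \<bar>x - x0\<bar> < min r s \<longrightarrow> (H(j := Hj)) i (complex_of_real x) = h i x)"
      using H Hj by (auto intro: holomorphic_on_subset)
  qed
  moreover have "min r s > 0"
    using \<open>r > 0\<close> \<open>s > 0\<close> by simp
  ultimately show ?case
    by blast
qed

lemma holomorphic_extensible_on_discr:
  fixes g :: "real \<Rightarrow> complex^'n^'n"
  assumes "\<And>i j. holomorphic_extensible_on (\<lambda>x. g x $ i $ j) U"
  shows "holomorphic_extensible_on (\<lambda>x. discr (g x)) U"
  unfolding holomorphic_extensible_on_def
proof
  fix x0 assume "x0 \<in> U"
  then obtain r H where "r > 0"
    and H: "\<forall>(i, j)\<in>UNIV. H (i, j) holomorphic_on ball (complex_of_real x0) r \<and>
      (\<forall>x. \<bar>x - x0\<bar> < r \<longrightarrow> H (i, j) (complex_of_real x) = g x $ i $ j)"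
    using holomorphic_extensible_on_common_radius[of UNIV "\<lambda>(i, j) x. g x $ i $ j" U x0] assms
    by auto
  define HM where "HM z = (\<chi> i j. H (i, j) z)" for z
  have "(\<lambda>z. discr (HM z)) holomorphic_on ball (complex_of_real x0) r"
    using H by (intro holomorphic_on_discr) (simp add: HM_def)
  moreover have "HM (complex_of_real x) = g x" if "\<bar>x - x0\<bar> < r" for x
    using H that by (simp add: HM_def Finite_Cartesian_Product.vec_eq_iff)
  ultimately show "\<exists>r>0. \<exists>H. H holomorphic_on ball (complex_of_real x0) r \<and>
      (\<forall>x. \<bar>x - x0\<bar> < r \<longrightarrow> H (complex_of_real x) = discr (g x))"
    using \<open>r > 0\<close> by (intro exI[of _ r] exI[of _ "\<lambda>z. discr (HM z)"]) auto
qed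

lemma holomorphic_extension_vanishes_near_limit_of_zeros:
  assumes H: "H holomorphic_on ball (complex_of_real x0) r"
    and extends: "\<And>x. \<bar>x - x0\<bar> < r \<Longrightarrow> H (complex_of_real x) = h x"
    and limit: "x0 islimpt {x. h x = 0}"
    and x: "\<bar>x - x0\<bar> < r"
  shows "h x = 0"
proof -
  define Z where "Z = complex_of_real ` {y. h y = 0 \<and> \<bar>y - x0\<bar> < r}"
  have Z_ball: "Z \<subseteq> ball (complex_of_real x0) r"
    by (auto simp: Z_def dist_norm norm_minus_commute simp flip: of_real_diff)
  have H_Z: "H z = 0" if "z \<in> Z" for z
    using that extends by (auto simp: Z_def)
  have Z_limit: "complex_of_real x0 islimpt Z"
    unfolding islimpt_approachable
  proof (intro allI impI)
    fix e :: real assume "e > 0"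
    moreover have "r > 0"
      using x by linarith
    ultimately obtain y where "y \<in> {x. h x = 0}" "y \<noteq> x0" "dist y x0 < min e r"
      using limit unfolding islimpt_approachable by (metis min_less_iff_conj)
    then show "\<exists>z\<in>Z. z \<noteq> complex_of_real x0 \<and> dist z (complex_of_real x0) < e"
      by (intro bexI[of _ "complex_of_real y"])
         (auto simp: Z_def dist_real_def dist_norm simp flip: of_real_diff)
  qed
  have "H (complex_of_real x) = 0"
    by (rule analytic_continuation[OF H open_ball connected_ball Z_ball _ Z_limit H_Z])
       (use x in \<open>auto simp: dist_norm abs_minus_commute simp flip: of_real_diff\<close>)
  then show ?thesis
    using extends[OF x] by simp
qed

lemma holomorphic_extensible_on_eq_0:
  assumes extensible: "holomorphic_extensible_on h U" and "connected U"
    and "open V" "V \<noteq> {}" "V \<subseteq> U" and zero: "\<And>x. x \<in> V \<Longrightarrow> h x = 0"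
    and "y \<in> U"
  shows "h y = 0"
proof -
  define T where "T = U \<inter> interior {x. h x = 0}"
  have "openin (top_of_set U) T"
    by (simp add: T_def openin_open_Int)
  moreover have "closedin (top_of_set U) T"
    unfolding closedin_limpt
  proof (intro conjI allI impI)
    show "T \<subseteq> U" by (simp add: T_def)
    fix x assume "x islimpt T \<and> x \<in> U"
    then have "x islimpt {x. h x = 0}" "x \<in> U"
      using interior_subset islimpt_subset unfolding T_def by blast+
    then obtain r H where "r > 0" and H: "H holomorphic_on ball (complex_of_real x) r"
      and extends: "\<forall>y. \<bar>y - x\<bar> < r \<longrightarrow> H (complex_of_real y) = h y"
      using extensible unfolding holomorphic_extensible_on_def by blast
    have "ball x r \<subseteq> {x. h x = 0}"
      using holomorphic_extension_vanishes_near_limit_of_zeros[OF H _ \<open>x islimpt _\<close>] extends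
      by (auto simp: dist_real_def abs_minus_commute)
    then have "x \<in> interior {x. h x = 0}"
      using \<open>r > 0\<close> by (meson centre_in_ball interior_maximal open_ball subsetD)
    then show "x \<in> T"
      using \<open>x \<in> U\<close> by (simp add: T_def)
  qed
  moreover have "V \<subseteq> interior {x. h x = 0}"
    using \<open>open V\<close> zero by (intro interior_maximal) auto
  then have "V \<subseteq> T"
    using \<open>V \<subseteq> U\<close> by (auto simp: T_def)
  ultimately have "T = U"
    using \<open>connected U\<close> \<open>V \<noteq> {}\<close> unfolding connected_clopen by blast
  then show ?thesis
    using \<open>y \<in> U\<close> interior_subset unfolding T_def by blast
qed

lemma holomorphic_extensible_on_nonzero_accumulates:
  assumes extensible: "holomorphic_extensible_on h {a..b}" and "a < b"
    and "y \<in> {a..b}" "h y \<noteq> 0"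
  shows "a islimpt {t \<in> {a..b}. h t \<noteq> 0}"
proof (rule ccontr)
  assume "\<not> ?thesis"
  then obtain e where "e > 0"
    and far: "\<And>t. t \<in> {a..b} \<Longrightarrow> h t \<noteq> 0 \<Longrightarrow> t \<noteq> a \<Longrightarrow> e \<le> dist t a"
    unfolding islimpt_approachable by (auto simp: not_less)
  have "h y = 0"
  proof (rule holomorphic_extensible_on_eq_0[OF extensible connected_Icc])
    show "h t = 0" if "t \<in> {a<..<min (a + e) b}" for t
      using that far[of t] by (force simp: dist_real_def)
  qed (use \<open>e > 0\<close> \<open>a < b\<close> \<open>y \<in> {a..b}\<close> in auto)
  with \<open>h y \<noteq> 0\<close> show False ..
qed

lemma analytic_on_01_imp_holomorphic_extensible:
  assumes "analytic_on_01 f"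
  shows "\<exists>g. holomorphic_extensible_on g {0..1} \<and> (\<forall>t\<in>{0..1}. f t = g t)"
proof -
  obtain a b g where "a < 0" "1 < b" "real_analytic_on g {a<..<b}" "\<forall>t\<in>{0..1}. f t = g t"
    using assms unfolding analytic_on_01_def by blast
  moreover have "{0..1} \<subseteq> {a<..<b}"
    using \<open>a < 0\<close> \<open>1 < b\<close> by auto
  ultimately show ?thesis
    by (meson holomorphic_extensible_on_subset real_analytic_on_imp_holomorphic_extensible_on)
qed

lemma analytic_on_01_matrix_imp_holomorphic_extensible:
  fixes p :: "real \<Rightarrow> complex^'n^'n"
  assumes "\<And>i j. analytic_on_01 (\<lambda>t. p t $ i $ j)"
  obtains g :: "real \<Rightarrow> complex^'n^'n"
  where "\<And>i j. holomorphic_extensible_on (\<lambda>t. g t $ i $ j) {0..1}"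
    and "\<And>t. t \<in> {0..1} \<Longrightarrow> g t = p t"
proof -
  obtain g' where g': "\<And>i j. holomorphic_extensible_on (g' i j) {0..1} \<and>
      (\<forall>t\<in>{0..1}. p t $ i $ j = g' i j t)"
    using analytic_on_01_imp_holomorphic_extensible[OF assms] by metis
  show thesis
    by (rule that[of "\<lambda>t. \<chi> i j. g' i j t"])
       (use g' in \<open>auto simp: Finite_Cartesian_Product.vec_eq_iff\<close>)
qed

lemma islimpt_imp_image_in_closure:
  assumes "continuous_on S f" "closed S" "Z \<subseteq> S" "x islimpt Z"
  shows "f x \<in> closure (f ` Z)"
proof -
  have "closure Z \<subseteq> S"
    using assms(2,3) by (simp add: closure_minimal)
  then have "f ` closure Z \<subseteq> closure (f ` Z)"
    using assms(1) by (simp add: continuous_image_closure_subset)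
  moreover have "x \<in> closure Z"
    using assms(4) by (simp add: closure_def)
  ultimately show ?thesis
    by blast
qed

theorem theorem4p4:
  fixes \<Gamma> :: "(complex^'n^'n) set"
  assumes sub: "\<Gamma> \<subseteq> real_spectrum_matrices"
    and paths: "\<And>A B. A \<in> \<Gamma> \<Longrightarrow> B \<in> \<Gamma> \<Longrightarrow>
        \<exists>p :: real \<Rightarrow> complex^'n^'n.
          (\<forall>i j. analytic_on_01 (\<lambda>t. p t $ i $ j)) \<and>
          p 0 = A \<and> p 1 = B \<and> p ` {0..1} \<subseteq> \<Gamma>"
    and ex: "\<exists>A\<in>\<Gamma>. distinct_eigenvalues A"
  shows "\<Gamma> \<subseteq> closure {A\<in>\<Gamma>. distinct_eigenvalues A}"
proof
  fix B assume "B \<in> \<Gamma>"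
  obtain A where "A \<in> \<Gamma>" "distinct_eigenvalues A"
    using ex by blast
  obtain p where p_analytic: "\<forall>i j. analytic_on_01 (\<lambda>t. p t $ i $ j)"
    and "p 0 = B" "p 1 = A" and p_\<Gamma>: "p ` {0..1} \<subseteq> \<Gamma>"
    using paths[OF \<open>B \<in> \<Gamma>\<close> \<open>A \<in> \<Gamma>\<close>] by blast
  obtain g where g: "\<And>i j. holomorphic_extensible_on (\<lambda>t. g t $ i $ j) {0..1}"
    and g_p: "\<And>t. t \<in> {0..1} \<Longrightarrow> g t = p t"
    using analytic_on_01_matrix_imp_holomorphic_extensible[of p] p_analytic by blast
  define Z where "Z = {t \<in> {0..1}. discr (g t) \<noteq> 0}"
  have "0 islimpt Z"
    unfolding Z_def
  proof (rule holomorphic_extensible_on_nonzero_accumulates)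
    show "holomorphic_extensible_on (\<lambda>t. discr (g t)) {0..1}"
      by (rule holomorphic_extensible_on_discr[OF g])
    show "discr (g 1) \<noteq> 0"
      using \<open>distinct_eigenvalues A\<close> \<open>p 1 = A\<close> g_p[of 1]
      by (simp add: distinct_eigenvalues_iff_discr)
  qed auto
  have "continuous_on {0..1} (\<lambda>t. \<chi> i j. g t $ i $ j)"
    by (intro continuous_on_vec_lambda holomorphic_extensible_on_imp_continuous_on g)
  then have "g 0 \<in> closure (g ` Z)"
    using \<open>0 islimpt Z\<close>
    by (intro islimpt_imp_image_in_closure[where S = "{0..1}"]) (auto simp: Z_def)
  also have "closure (g ` Z) \<subseteq> closure {A\<in>\<Gamma>. distinct_eigenvalues A}"
    using p_\<Gamma> g_p by (intro closure_mono) (auto simp: Z_def distinct_eigenvalues_iff_discr)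
  finally show "B \<in> closure {A\<in>\<Gamma>. distinct_eigenvalues A}"
    using \<open>p 0 = B\<close> g_p[of 0] by simp
qed

end
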